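(* Let $\alpha>0$. Let $R_1$ be the Reeb graph consisting of a single edge with $f_1$ ranging over $[0,\alpha]$, and let $R_2$ be the Reeb graph with two nodes of values $0$ and $\alpha$ joined by two edges (a loop of height $\alpha$). Then $d_I(R_1,R_2)=\alpha/4$, and there is no Reeb graph $M$ with $d_I(M,R_1)=d_I(M,R_2)=\alpha/8$.
   Context: A Reeb graph $R=(G,f)$ is a finite multigraph $G$ (identified with its geometric realization) with continuous $f$ strictly monotone on each edge and injective on nodes. A morphism is a continuous map $h$ with $f_2\circ h=f_1$. For $\varepsilon\ge0$, $R^\varepsilon$ is the Reeb graph (quotient by connected components of level sets) of $G\times[-\varepsilon,\varepsilon]$ with function $(x,t)\mapsto f(x)+t$, with quotient map $\pi$; $(R^\varepsilon)^\delta$ is identified with $R^{\varepsilon+\delta}$; $\eta(x)=\pi(x,0)$ is the shift $R\to R^\varepsilon$ and $\eta^{2\varepsilon}:R\to R^{2\varepsilon}$ the $2\varepsilon$-shift. For a morphism $\phi:R_1\to R_2^\varepsilon$, $\phi^\varepsilon:R_1^\varepsilon\to R_2^{2\varepsilon}$ is induced by $(x,t)\mapsto(\phi(x),t)$ on thickenings. An $\varepsilon$-interleaving is a pair $\phi:R_1\to R_2^\varepsilon$, $\psi:R_2\to R_1^\varepsilon$ with $\phi^\varepsilon\circ\psi=\eta_2^{2\varepsilon}$ and $\psi^\varepsilon\circ\phi=\eta_1^{2\varepsilon}$; $d_I$ is the infimum of $\varepsilon\ge0$ admitting an $\varepsilon$-interleaving. *)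

theory Defs
  imports "HOL-Analysis.Analysis"
begin

text \<open>A Reeb graph is a topological space X (the geometric realization of a finite
multigraph) together with a continuous f, strictly monotone on each edge and
injective on the nodes.  The realization is described intrinsically: X is compact
Hausdorff and is the union of a finite node set V and finitely many edges, each edge
being an arc (injective continuous path on [0,1]) between two nodes, along which f is
strictly monotone, whose interior avoids V and the interiors of the other edges.
(Compact Hausdorff makes the topology that of the geometric realization.)\<close>

definition reeb_graph :: "'a topology \<Rightarrow> ('a \<Rightarrow> real) \<Rightarrow> bool" where
  "reeb_graph X f \<longleftrightarrow>
     compact_space X \<and> Hausdorff_space X \<and> continuous_map X euclideanreal f \<and>
     (\<exists>V E. finite V \<and> finite E \<and> V \<subseteq> topspace X \<and> inj_on f V \<and>
        (\<forall>\<gamma>\<in>(E :: (real \<Rightarrow> 'a) set). continuous_map (top_of_set {0..1}) X \<gamma> \<and> inj_on \<gamma> {0..1} \<and>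
               \<gamma> 0 \<in> V \<and> \<gamma> 1 \<in> V \<and> \<gamma> ` {0<..<1} \<inter> V = {} \<and>
               strict_mono_on {0..1} (f \<circ> \<gamma>)) \<and>
        (\<forall>\<gamma>\<in>E. \<forall>\<delta>\<in>E. \<gamma> \<noteq> \<delta> \<longrightarrow> \<gamma> ` {0<..<1} \<inter> \<delta> ` {0<..<1} = {}) \<and>
        topspace X = V \<union> (\<Union>\<gamma>\<in>E. \<gamma> ` {0..1}))"

definition reeb_morphism ::
  "'a topology \<Rightarrow> ('a \<Rightarrow> real) \<Rightarrow> 'b topology \<Rightarrow> ('b \<Rightarrow> real) \<Rightarrow> ('a \<Rightarrow> 'b) \<Rightarrow> bool" where
  "reeb_morphism X f Y g h \<longleftrightarrow> continuous_map X Y h \<and> (\<forall>x\<in>topspace X. g (h x) = f x)"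

definition quotient_top :: "'a topology \<Rightarrow> ('a \<Rightarrow> 'b) \<Rightarrow> 'b topology" where
  "quotient_top X q = topology (\<lambda>U. U \<subseteq> q ` topspace X \<and> openin X {x \<in> topspace X. q x \<in> U})"

definition thick_space :: "'a topology \<Rightarrow> real \<Rightarrow> ('a \<times> real) topology" where
  "thick_space X \<epsilon> = prod_topology X (top_of_set {-\<epsilon>..\<epsilon>})"

definition thick_F :: "('a \<Rightarrow> real) \<Rightarrow> 'a \<times> real \<Rightarrow> real" where
  "thick_F f p = f (fst p) + snd p"

definition thick_cls :: "'a topology \<Rightarrow> ('a \<Rightarrow> real) \<Rightarrow> real \<Rightarrow> 'a \<times> real \<Rightarrow> ('a \<times> real) set" where
  "thick_cls X f \<epsilon> p = connected_component_of_set
      (subtopology (thick_space X \<epsilon>) {q \<in> topspace (thick_space X \<epsilon>). thick_F f q = thick_F f p}) p"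

definition thick :: "'a topology \<Rightarrow> ('a \<Rightarrow> real) \<Rightarrow> real \<Rightarrow> ('a \<times> real) set topology" where
  "thick X f \<epsilon> = quotient_top (thick_space X \<epsilon>) (thick_cls X f \<epsilon>)"

definition thick_fun :: "('a \<Rightarrow> real) \<Rightarrow> ('a \<times> real) set \<Rightarrow> real" where
  "thick_fun f C = thick_F f (SOME p. p \<in> C)"

definition reeb_shift :: "'a topology \<Rightarrow> ('a \<Rightarrow> real) \<Rightarrow> real \<Rightarrow> 'a \<Rightarrow> ('a \<times> real) set" where
  "reeb_shift X f \<delta> x = thick_cls X f \<delta> (x, 0)"

(* For phi : R1 -> R2^eps, the map phi^eps : R1^eps -> R2^(2 eps) induced by
   (x,t) |-> (phi(x),t), composed with the identification (R2^eps)^eps = R2^(2 eps),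
   which sends the class of (pi(y,s),t) to the class of (y,s+t). *)
definition reeb_ext ::
  "'b topology \<Rightarrow> ('b \<Rightarrow> real) \<Rightarrow> real \<Rightarrow> ('a \<Rightarrow> ('b \<times> real) set) \<Rightarrow> ('a \<times> real) set \<Rightarrow> ('b \<times> real) set" where
  "reeb_ext Y g \<epsilon> \<phi> C =
     (let p = (SOME p. p \<in> C); q = (SOME q. q \<in> \<phi> (fst p))
      in thick_cls Y g (2 * \<epsilon>) (fst q, snd q + snd p))"

definition interleaved ::
  "'a topology \<Rightarrow> ('a \<Rightarrow> real) \<Rightarrow> 'b topology \<Rightarrow> ('b \<Rightarrow> real) \<Rightarrow> real \<Rightarrow> bool" where
  "interleaved X1 f1 X2 f2 \<epsilon> \<longleftrightarrow>
     (\<exists>\<phi> \<psi>. reeb_morphism X1 f1 (thick X2 f2 \<epsilon>) (thick_fun f2) \<phi> \<and>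
            reeb_morphism X2 f2 (thick X1 f1 \<epsilon>) (thick_fun f1) \<psi> \<and>
            (\<forall>y\<in>topspace X2. reeb_ext X2 f2 \<epsilon> \<phi> (\<psi> y) = reeb_shift X2 f2 (2 * \<epsilon>) y) \<and>
            (\<forall>x\<in>topspace X1. reeb_ext X1 f1 \<epsilon> \<psi> (\<phi> x) = reeb_shift X1 f1 (2 * \<epsilon>) x))"

text \<open>Infimum in the extended reals (\<open>\<infinity>\<close> if no interleaving exists).\<close>
definition interleaving_distance ::
  "'a topology \<Rightarrow> ('a \<Rightarrow> real) \<Rightarrow> 'b topology \<Rightarrow> ('b \<Rightarrow> real) \<Rightarrow> ereal" where
  "interleaving_distance X1 f1 X2 f2 =
     Inf {ereal \<epsilon> | \<epsilon>. \<epsilon> \<ge> 0 \<and> interleaved X1 f1 X2 f2 \<epsilon>}"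

text \<open>\<open>R_1\<close>: a single edge, the interval [0,\<alpha>] with f = identity.\<close>
definition edge_space :: "real \<Rightarrow> real topology" where
  "edge_space \<alpha> = top_of_set {0..\<alpha>}"

text \<open>\<open>R_2\<close>: two nodes (0,0) and (\<alpha>,0) joined by two arcs (upper and lower parabola),
f = first coordinate.\<close>
definition loop_space :: "real \<Rightarrow> (real \<times> real) topology" where
  "loop_space \<alpha> = top_of_set {(t, y). 0 \<le> t \<and> t \<le> \<alpha> \<and> (y = t * (\<alpha> - t) \<or> y = - (t * (\<alpha> - t)))}"

end

theory Submission
  imports Defs
begin

(* Level sets of a thickened edge are convex, so a map into a thickened edge cannot separate two
   points of equal height.  In the r-thickened loop, the sign of the second coordinate is locally
   constant on level sets strictly between heights r and alpha - r; hence for 2 eps < alpha/2 the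
   2eps-shift keeps the two midpoints of the loop apart although they factor through the same point
   of the edge, so d_I >= alpha/4.  For eps = alpha/4 every level set of the alpha/2-thickened loop
   runs through a node, and lifting the edge to the upper branch and projecting the loop onto the
   edge interleave.

   Suppose M is eps-interleaved with the edge and delta-interleaved with the loop, where
   2 eps + delta < alpha/2 and 3 delta < alpha/2 (as happens when both distances are alpha/8).
   Through phi2 every point of M in the band delta < g < alpha - delta chooses a branch of the
   loop, in a locally constant way.  Through the edge, all points of M at height alpha/2 choose
   the same branch.  The opposite branch of the loop, pushed into M^delta by psi2, therefore never
   meets height alpha/2 and, being connected, stays on one side of it; yet near height alpha/4 it
   lies below alpha/2 and near height 3 alpha/4 above. *)

lemma connectedin_subset_open_cover:
  assumes "connectedin T S" "openin T P" "openin T Q" "S \<subseteq> P \<union> Q" "P \<inter> Q \<inter> S = {}"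
    and "z \<in> S" "z \<in> P"
  shows "S \<subseteq> P"
  using connectedinD[OF assms(1-5)] assms(4,6,7) by blast

lemma openin_Collect_conj:
  assumes "openin X {x \<in> topspace X. P x}" "openin X {x \<in> topspace X. Q x}"
  shows "openin X {x \<in> topspace X. P x \<and> Q x}"
proof -
  have "{x \<in> topspace X. P x \<and> Q x} = {x \<in> topspace X. P x} \<inter> {x \<in> topspace X. Q x}" by blast
  then show ?thesis using assms by auto
qed

lemma openin_Collect_real_less:
  assumes "continuous_map X euclideanreal f" "continuous_map X euclideanreal h"
  shows "openin X {x \<in> topspace X. f x < h x}"
  using openin_continuous_map_preimage[OF continuous_map_diff[OF assms(2,1)], of "{0<..}"] by simp

lemma istopology_quotient:
  "istopology (\<lambda>U. U \<subseteq> q ` topspace X \<and> openin X {x \<in> topspace X. q x \<in> U})"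
  unfolding istopology_def
proof (rule conjI; intro allI impI)
  fix S T
  assume "S \<subseteq> q ` topspace X \<and> openin X {x \<in> topspace X. q x \<in> S}"
    and "T \<subseteq> q ` topspace X \<and> openin X {x \<in> topspace X. q x \<in> T}"
  moreover have "{x \<in> topspace X. q x \<in> S \<inter> T} =
      {x \<in> topspace X. q x \<in> S} \<inter> {x \<in> topspace X. q x \<in> T}" by auto
  ultimately show "S \<inter> T \<subseteq> q ` topspace X \<and> openin X {x \<in> topspace X. q x \<in> S \<inter> T}"
    by auto
next
  fix K
  assume "\<forall>U\<in>K. U \<subseteq> q ` topspace X \<and> openin X {x \<in> topspace X. q x \<in> U}"
  moreover have "{x \<in> topspace X. q x \<in> \<Union>K} = (\<Union>U\<in>K. {x \<in> topspace X. q x \<in> U})" by auto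
  ultimately show "\<Union>K \<subseteq> q ` topspace X \<and> openin X {x \<in> topspace X. q x \<in> \<Union>K}"
    by auto
qed

lemma openin_quotient_top:
  "openin (quotient_top X q) U \<longleftrightarrow> U \<subseteq> q ` topspace X \<and> openin X {x \<in> topspace X. q x \<in> U}"
  unfolding quotient_top_def by (simp add: topology_inverse'[OF istopology_quotient])

lemma topspace_quotient_top: "topspace (quotient_top X q) = q ` topspace X"
proof -
  have "{x \<in> topspace X. q x \<in> q ` topspace X} = topspace X" by blast
  then have "openin (quotient_top X q) (q ` topspace X)"
    by (simp add: openin_quotient_top)
  moreover have "topspace (quotient_top X q) \<subseteq> q ` topspace X"
    using openin_topspace[of "quotient_top X q"] unfolding openin_quotient_top by blast
  ultimately show ?thesis using openin_subset by blast
qed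

lemma continuous_map_quotient_top: "continuous_map X (quotient_top X q) q"
  unfolding continuous_map_def topspace_quotient_top openin_quotient_top by auto

section \<open>Thickenings\<close>

lemma topspace_thick_space: "topspace (thick_space X r) = topspace X \<times> {-r..r}"
  by (simp add: thick_space_def)

lemma continuous_map_thick_space_fst: "continuous_map (thick_space X r) X fst"
  by (simp add: thick_space_def continuous_map_fst)

lemma continuous_map_thick_F:
  assumes "continuous_map X euclideanreal f"
  shows "continuous_map (thick_space X r) euclideanreal (thick_F f)"
proof -
  have "continuous_map (thick_space X r) euclideanreal (\<lambda>w. f (fst w) + snd w)"
    unfolding thick_space_def
    by (intro continuous_map_add continuous_map_compose[OF continuous_map_fst assms, unfolded o_def]
        continuous_map_into_fulltopology[OF continuous_map_snd])
  then show ?thesis unfolding thick_F_def[abs_def] .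
qed

lemma thick_cls_refl: "z \<in> topspace (thick_space X r) \<Longrightarrow> z \<in> thick_cls X f r z"
  unfolding thick_cls_def by (simp add: connected_component_of_refl)

lemma thick_cls_memD:
  assumes "w \<in> thick_cls X f r z"
  shows "w \<in> topspace (thick_space X r)" "thick_F f w = thick_F f z"
proof -
  have "connected_component_of (subtopology (thick_space X r)
      {q \<in> topspace (thick_space X r). thick_F f q = thick_F f z}) z w"
    using assms unfolding thick_cls_def by simp
  then have "w \<in> topspace (subtopology (thick_space X r)
      {q \<in> topspace (thick_space X r). thick_F f q = thick_F f z})"
    by (rule connected_component_in_topspace[THEN conjunct2])
  then show "w \<in> topspace (thick_space X r)" "thick_F f w = thick_F f z" by auto
qed

lemma connectedin_thick_cls: "connectedin (thick_space X r) (thick_cls X f r z)"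
proof -
  have "connectedin (subtopology (thick_space X r)
      {q \<in> topspace (thick_space X r). thick_F f q = thick_F f z}) (thick_cls X f r z)"
    unfolding thick_cls_def by (rule connectedin_connected_component_of)
  then show ?thesis by (simp add: connectedin_subtopology)
qed

lemma thick_cls_maximal:
  assumes "connectedin (thick_space X r) S" "z \<in> S" "\<forall>w\<in>S. thick_F f w = thick_F f z"
  shows "S \<subseteq> thick_cls X f r z"
proof -
  have "S \<subseteq> {q \<in> topspace (thick_space X r). thick_F f q = thick_F f z}"
    using connectedin_subset_topspace[OF assms(1)] assms(3) by auto
  then have "connectedin (subtopology (thick_space X r)
      {q \<in> topspace (thick_space X r). thick_F f q = thick_F f z}) S"
    using assms(1) by (simp add: connectedin_subtopology)
  then show ?thesis
    unfolding thick_cls_def using assms(2) by (rule connected_component_of_maximal)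
qed

lemma thick_cls_eq_level_set:
  assumes "connectedin (thick_space X r) {w \<in> topspace (thick_space X r). thick_F f w = c}"
    and "z \<in> topspace (thick_space X r)" "thick_F f z = c"
  shows "thick_cls X f r z = {w \<in> topspace (thick_space X r). thick_F f w = c}"
proof
  show "thick_cls X f r z \<subseteq> {w \<in> topspace (thick_space X r). thick_F f w = c}"
    using thick_cls_memD[of _ X f r z] assms(3) by blast
  show "{w \<in> topspace (thick_space X r). thick_F f w = c} \<subseteq> thick_cls X f r z"
    using assms by (intro thick_cls_maximal) auto
qed

lemma thick_cls_subset_open_cover:
  assumes "openin (thick_space X r) P" "openin (thick_space X r) Q"
    and "thick_cls X f r z \<subseteq> P \<union> Q" "P \<inter> Q = {}" "z \<in> P"
  shows "thick_cls X f r z \<subseteq> P"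
proof -
  have "z \<in> topspace (thick_space X r)" using assms(1,5) openin_subset by blast
  then have "z \<in> thick_cls X f r z" by (rule thick_cls_refl)
  then show ?thesis
    using connectedin_subset_open_cover[OF connectedin_thick_cls assms(1-3)] assms(4,5) by blast
qed

lemma thick_fun_thick_cls:
  assumes "z \<in> topspace (thick_space X r)"
  shows "thick_fun f (thick_cls X f r z) = thick_F f z"
proof -
  have "(SOME p. p \<in> thick_cls X f r z) \<in> thick_cls X f r z"
    using thick_cls_refl[OF assms] by (rule someI)
  then show ?thesis unfolding thick_fun_def by (rule thick_cls_memD(2))
qed

lemma topspace_thick: "topspace (thick X f r) = thick_cls X f r ` topspace (thick_space X r)"
  by (simp add: thick_def topspace_quotient_top)

lemma continuous_map_thick_cls: "continuous_map (thick_space X r) (thick X f r) (thick_cls X f r)"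
  by (simp add: thick_def continuous_map_quotient_top)

definition thick_saturated :: "'a topology \<Rightarrow> ('a \<Rightarrow> real) \<Rightarrow> real \<Rightarrow> ('a \<times> real) set \<Rightarrow> bool" where
  "thick_saturated X f r P \<longleftrightarrow> (\<forall>z\<in>P. thick_cls X f r z \<subseteq> P)"

lemma openin_thick_cls_image:
  assumes "openin (thick_space X r) P" "thick_saturated X f r P"
  shows "openin (thick X f r) (thick_cls X f r ` P)"
proof -
  have P: "P \<subseteq> topspace (thick_space X r)" using assms(1) openin_subset by blast
  have "{z \<in> topspace (thick_space X r). thick_cls X f r z \<in> thick_cls X f r ` P} = P"
    using P assms(2) thick_cls_refl unfolding thick_saturated_def by blast
  then show ?thesis
    using assms(1) P by (auto simp: thick_def openin_quotient_top)
qed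

lemma thick_cls_image_disjoint:
  assumes "thick_saturated X f r P" "Q \<subseteq> topspace (thick_space X r)" "P \<inter> Q = {}"
  shows "thick_cls X f r ` P \<inter> thick_cls X f r ` Q = {}"
proof (intro equals0I)
  fix C assume "C \<in> thick_cls X f r ` P \<inter> thick_cls X f r ` Q"
  then obtain z z' where "z \<in> P" "z' \<in> Q" "thick_cls X f r z' = thick_cls X f r z" by blast
  moreover have "z' \<in> thick_cls X f r z'" using \<open>z' \<in> Q\<close> assms(2) thick_cls_refl by blast
  ultimately show False using assms unfolding thick_saturated_def by blast
qed

lemma connectedin_thick_saturated_cover:
  assumes h: "continuous_map X (thick Y f r) h" and S: "connectedin X S"
    and P: "openin (thick_space Y r) P" "thick_saturated Y f r P"
    and Q: "openin (thick_space Y r) Q" "thick_saturated Y f r Q"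
    and disjoint: "P \<inter> Q = {}"
    and cover: "\<And>x. x \<in> S \<Longrightarrow> h x \<in> thick_cls Y f r ` P \<union> thick_cls Y f r ` Q"
    and a: "a \<in> S" "h a \<in> thick_cls Y f r ` P" and b: "b \<in> S"
  shows "h b \<in> thick_cls Y f r ` P"
proof -
  define A where "A = {x \<in> topspace X. h x \<in> thick_cls Y f r ` P}"
  define B where "B = {x \<in> topspace X. h x \<in> thick_cls Y f r ` Q}"
  have "openin X A" "openin X B"
    unfolding A_def B_def
    by (intro openin_continuous_map_preimage[OF h] openin_thick_cls_image P Q)+
  moreover have "S \<subseteq> A \<union> B"
    using cover connectedin_subset_topspace[OF S] unfolding A_def B_def by blast
  moreover have "A \<inter> B \<inter> S = {}"
    using thick_cls_image_disjoint[OF P(2) openin_subset[OF Q(1)] disjoint]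
    unfolding A_def B_def by blast
  moreover have "a \<in> A" using a connectedin_subset_topspace[OF S] unfolding A_def by blast
  ultimately have "S \<subseteq> A" using connectedin_subset_open_cover[OF S] a(1) by blast
  then show ?thesis using b unfolding A_def by blast
qed

lemma reeb_morphism_thickE:
  assumes "reeb_morphism X f (thick Y g r) (thick_fun g) h" "x \<in> topspace X"
  obtains z where "z \<in> topspace (thick_space Y r)" "h x = thick_cls Y g r z" "thick_F g z = f x"
    "z \<in> h x"
proof -
  have "h x \<in> topspace (thick Y g r)"
    using assms continuous_map_image_subset_topspace unfolding reeb_morphism_def by blast
  then obtain z where z: "z \<in> topspace (thick_space Y r)" "h x = thick_cls Y g r z"
    unfolding topspace_thick by blast
  moreover have "thick_fun g (h x) = f x"
    using assms unfolding reeb_morphism_def by blast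
  then have "thick_F g z = f x"
    using z thick_fun_thick_cls[OF z(1), of g] by simp
  ultimately show ?thesis using that thick_cls_refl by blast
qed

lemma reeb_morphism_thick_memD:
  assumes "reeb_morphism X f (thick Y g r) (thick_fun g) h" "x \<in> topspace X" "w \<in> h x"
  shows "w \<in> topspace (thick_space Y r)" "thick_F g w = f x"
proof -
  obtain z where "h x = thick_cls Y g r z" "thick_F g z = f x"
    by (rule reeb_morphism_thickE[OF assms(1,2)])
  then show "w \<in> topspace (thick_space Y r)" "thick_F g w = f x"
    using thick_cls_memD[of w Y g r z] assms(3) by auto
qed

lemma reeb_ext_compE:
  assumes \<phi>: "reeb_morphism X f (thick Y g \<epsilon>) (thick_fun g) \<phi>"
    and \<psi>: "reeb_morphism Y g (thick X f \<epsilon>) (thick_fun f) \<psi>" and x: "x \<in> topspace X"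
  obtains p q where "p \<in> \<phi> x" "q \<in> \<psi> (fst p)"
    "reeb_ext X f \<epsilon> \<psi> (\<phi> x) = thick_cls X f (2*\<epsilon>) (fst q, snd q + snd p)"
    "p \<in> topspace (thick_space Y \<epsilon>)" "thick_F g p = f x"
    "(fst q, snd q + snd p) \<in> topspace (thick_space X (2*\<epsilon>))"
    "thick_F f (fst q, snd q + snd p) = f x"
proof -
  define p where "p = (SOME p. p \<in> \<phi> x)"
  obtain z where "z \<in> \<phi> x" by (rule reeb_morphism_thickE[OF \<phi> x])
  then have p: "p \<in> \<phi> x" unfolding p_def by (rule someI)
  note p1 = reeb_morphism_thick_memD[OF \<phi> x p]
  have fp: "fst p \<in> topspace Y" using p1(1) by (auto simp: topspace_thick_space)
  define q where "q = (SOME q. q \<in> \<psi> (fst p))"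
  obtain z' where "z' \<in> \<psi> (fst p)" by (rule reeb_morphism_thickE[OF \<psi> fp])
  then have q: "q \<in> \<psi> (fst p)" unfolding q_def by (rule someI)
  note q1 = reeb_morphism_thick_memD[OF \<psi> fp q]
  have composite: "reeb_ext X f \<epsilon> \<psi> (\<phi> x) = thick_cls X f (2*\<epsilon>) (fst q, snd q + snd p)"
    unfolding reeb_ext_def Let_def p_def[symmetric] q_def[symmetric] ..
  have top: "(fst q, snd q + snd p) \<in> topspace (thick_space X (2*\<epsilon>))"
    using p1(1) q1(1) by (auto simp: topspace_thick_space)
  have level: "thick_F f (fst q, snd q + snd p) = f x"
    using p1(2) q1(2) by (simp add: thick_F_def)
  show ?thesis by (rule that[OF p q composite p1(1) p1(2) top level])
qed

lemma reeb_ext_comp_representativeE: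
  assumes "reeb_morphism X f (thick Y g \<epsilon>) (thick_fun g) \<phi>"
    and "reeb_morphism Y g (thick X f \<epsilon>) (thick_fun f) \<psi>" "x \<in> topspace X"
  obtains w where "reeb_ext X f \<epsilon> \<psi> (\<phi> x) = thick_cls X f (2*\<epsilon>) w"
    "w \<in> topspace (thick_space X (2*\<epsilon>))" "thick_F f w = f x"
proof -
  obtain p q where "p \<in> \<phi> x" "q \<in> \<psi> (fst p)"
    and w: "reeb_ext X f \<epsilon> \<psi> (\<phi> x) = thick_cls X f (2*\<epsilon>) (fst q, snd q + snd p)"
      "(fst q, snd q + snd p) \<in> topspace (thick_space X (2*\<epsilon>))"
      "thick_F f (fst q, snd q + snd p) = f x"
    and "p \<in> topspace (thick_space Y \<epsilon>)" "thick_F g p = f x"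
    by (rule reeb_ext_compE[OF assms])
  from w show ?thesis by (rule that)
qed

lemma thick_space_edge: "thick_space (edge_space \<alpha>) r = top_of_set ({0..\<alpha>} \<times> {-r..r})"
  by (simp add: thick_space_def edge_space_def)

lemma thick_cls_edge_eq:
  assumes "z \<in> topspace (thick_space (edge_space \<alpha>) r)" "w \<in> topspace (thick_space (edge_space \<alpha>) r)"
    and "thick_F (\<lambda>t. t) z = thick_F (\<lambda>t. t) w"
  shows "thick_cls (edge_space \<alpha>) (\<lambda>t. t) r z = thick_cls (edge_space \<alpha>) (\<lambda>t. t) r w"
proof -
  define c where "c = thick_F (\<lambda>t. t) w"
  define L where "L = {v \<in> topspace (thick_space (edge_space \<alpha>) r). thick_F (\<lambda>t. t) v = c}"
  have "L = ({0..\<alpha>} \<times> {-r..r}) \<inter> {v. inner (1::real, 1::real) v = c}"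
    by (auto simp: L_def thick_space_edge thick_F_def inner_prod_def)
  moreover have "convex (({0..\<alpha>} \<times> {-r..r}) \<inter> {v. inner (1::real, 1::real) v = c})"
    by (intro convex_Int convex_Times convex_hyperplane convex_real_interval)
  ultimately have "connectedin (thick_space (edge_space \<alpha>) r) L"
    by (simp add: thick_space_edge connectedin_subtopology convex_connected)
  then show ?thesis
    using thick_cls_eq_level_set[of "edge_space \<alpha>" r "\<lambda>t. t" c] assms unfolding L_def c_def by simp
qed

definition loop_set :: "real \<Rightarrow> (real \<times> real) set" where
  "loop_set \<alpha> = {(t, y). 0 \<le> t \<and> t \<le> \<alpha> \<and> (y = t * (\<alpha> - t) \<or> y = - (t * (\<alpha> - t)))}"

lemma thick_space_loop: "thick_space (loop_space \<alpha>) r = top_of_set (loop_set \<alpha> \<times> {-r..r})"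
  by (simp add: thick_space_def loop_space_def loop_set_def)

lemma continuous_map_loop_height: "continuous_map (loop_space \<alpha>) euclideanreal fst"
  unfolding loop_space_def by (simp add: continuous_on_fst)

lemma continuous_map_loop_branch: "continuous_map (loop_space \<alpha>) euclideanreal snd"
  unfolding loop_space_def by (simp add: continuous_on_snd)

lemma loop_branch_nonzero:
  assumes "w \<in> topspace (thick_space (loop_space \<alpha>) r)" "r < thick_F fst w" "thick_F fst w < \<alpha> - r"
  shows "snd (fst w) \<noteq> 0"
proof -
  obtain a b s where w: "w = ((a, b), s)" by (metis prod.exhaust)
  have "(a, b) \<in> loop_set \<alpha>" "-r \<le> s" "s \<le> r"
    using assms(1) w by (auto simp: thick_space_loop)
  moreover have "0 < a" "a < \<alpha>"
    using assms(2,3) calculation(2,3) w by (auto simp: thick_F_def)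
  ultimately show ?thesis using w by (auto simp: loop_set_def)
qed

lemma openin_loop_branch_band:
  "openin (thick_space (loop_space \<alpha>) r) {w \<in> topspace (thick_space (loop_space \<alpha>) r).
     lo < thick_F fst w \<and> thick_F fst w < hi \<and> (if b then 0 < snd (fst w) else snd (fst w) < 0)}"
proof -
  have F: "continuous_map (thick_space (loop_space \<alpha>) r) euclideanreal (thick_F fst)"
    by (rule continuous_map_thick_F[OF continuous_map_loop_height])
  have branch: "continuous_map (thick_space (loop_space \<alpha>) r) euclideanreal (\<lambda>w. snd (fst w))"
    using continuous_map_compose[OF continuous_map_thick_space_fst continuous_map_loop_branch]
    by (simp add: o_def)
  have "openin (thick_space (loop_space \<alpha>) r)
      {w \<in> topspace (thick_space (loop_space \<alpha>) r). if b then 0 < snd (fst w) else snd (fst w) < 0}"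
    using openin_Collect_real_less[OF continuous_map_const[THEN iffD2] branch, of 0]
      openin_Collect_real_less[OF branch continuous_map_const[THEN iffD2], of 0]
    by (cases b) auto
  moreover have "openin (thick_space (loop_space \<alpha>) r) {w \<in> topspace (thick_space (loop_space \<alpha>) r). lo < thick_F fst w}"
    "openin (thick_space (loop_space \<alpha>) r) {w \<in> topspace (thick_space (loop_space \<alpha>) r). thick_F fst w < hi}"
    by (intro openin_Collect_real_less F continuous_map_const[THEN iffD2]; simp)+
  ultimately show ?thesis by (intro openin_Collect_conj)
qed

lemma thick_cls_loop_branch:
  assumes z: "z \<in> topspace (thick_space (loop_space \<alpha>) r)" "r < thick_F fst z" "thick_F fst z < \<alpha> - r"
    and w: "w \<in> thick_cls (loop_space \<alpha>) fst r z"
  shows "(0 < snd (fst w)) = (0 < snd (fst z))"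
proof -
  define P where "P b = {w \<in> topspace (thick_space (loop_space \<alpha>) r).
     r < thick_F fst w \<and> thick_F fst w < \<alpha> - r \<and> (if b then 0 < snd (fst w) else snd (fst w) < 0)}" for b
  let ?b = "0 < snd (fst z)"
  have "thick_cls (loop_space \<alpha>) fst r z \<subseteq> P ?b \<union> P (\<not> ?b)"
  proof
    fix v assume "v \<in> thick_cls (loop_space \<alpha>) fst r z"
    note v = thick_cls_memD[OF this]
    then have "snd (fst v) \<noteq> 0" using z(2,3) by (intro loop_branch_nonzero) auto
    then show "v \<in> P ?b \<union> P (\<not> ?b)" using v z(2,3) by (auto simp: P_def)
  qed
  moreover have "z \<in> P ?b" using z loop_branch_nonzero[OF z] by (auto simp: P_def)
  moreover have "openin (thick_space (loop_space \<alpha>) r) (P b)" for b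
    unfolding P_def by (rule openin_loop_branch_band)
  moreover have "P ?b \<inter> P (\<not> ?b) = {}" by (auto simp: P_def)
  ultimately have "thick_cls (loop_space \<alpha>) fst r z \<subseteq> P ?b"
    by (metis thick_cls_subset_open_cover)
  then show ?thesis using w by (auto simp: P_def split: if_splits)
qed

definition loop_point :: "real \<Rightarrow> bool \<Rightarrow> real \<Rightarrow> real \<times> real" where
  "loop_point \<alpha> upper a = (a, (if upper then 1 else -1) * (a * (\<alpha> - a)))"

lemma loop_point_in_loop:
  assumes "0 < a" "a < \<alpha>"
  shows "loop_point \<alpha> upper a \<in> topspace (loop_space \<alpha>)" "(0 < snd (loop_point \<alpha> upper a)) = upper"
proof -
  have "0 < a * (\<alpha> - a)" using assms by simp
  then show "loop_point \<alpha> upper a \<in> topspace (loop_space \<alpha>)" "(0 < snd (loop_point \<alpha> upper a)) = upper"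
    using assms by (auto simp: loop_point_def loop_space_def mult_less_0_iff)
qed

lemma connectedin_loop_arc:
  assumes "0 \<le> c" "d \<le> \<alpha>"
  shows "connectedin (loop_space \<alpha>) (loop_point \<alpha> upper ` {c<..<d})"
proof -
  have "connected (loop_point \<alpha> upper ` {c<..<d})"
    unfolding loop_point_def by (intro connected_continuous_image continuous_intros) auto
  moreover have "loop_point \<alpha> upper ` {c<..<d} \<subseteq> topspace (loop_space \<alpha>)"
    using assms loop_point_in_loop(1) by force
  ultimately show ?thesis by (simp add: loop_space_def connectedin_subtopology)
qed

lemma loop_level_set_eq:
  "{w \<in> topspace (thick_space (loop_space \<alpha>) r). thick_F fst w = c} =
     (\<lambda>a. ((a, a * (\<alpha> - a)), c - a)) ` {max 0 (c - r)..min \<alpha> (c + r)} \<union>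
     (\<lambda>a. ((a, - (a * (\<alpha> - a))), c - a)) ` {max 0 (c - r)..min \<alpha> (c + r)}"
    (is "?L = ?upper ` ?I \<union> ?lower ` ?I")
proof (intro equalityI subsetI)
  fix w assume "w \<in> ?L"
  moreover obtain a b s where w: "w = ((a, b), s)" by (metis prod.exhaust)
  ultimately have ab: "(a, b) \<in> loop_set \<alpha>" and s: "-r \<le> s" "s \<le> r" "s = c - a"
    by (auto simp: thick_space_loop thick_F_def)
  then have a: "a \<in> ?I" by (auto simp: loop_set_def)
  from ab have "b = a * (\<alpha> - a) \<or> b = - (a * (\<alpha> - a))" by (simp add: loop_set_def)
  then show "w \<in> ?upper ` ?I \<union> ?lower ` ?I"
  proof
    assume "b = a * (\<alpha> - a)"
    then have "w = ?upper a" using w s by simp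
    then show ?thesis using a by blast
  next
    assume "b = - (a * (\<alpha> - a))"
    then have "w = ?lower a" using w s by simp
    then show ?thesis using a by blast
  qed
next
  fix w assume "w \<in> ?upper ` ?I \<union> ?lower ` ?I"
  then obtain a where "a \<in> ?I" "w = ?upper a \<or> w = ?lower a" by blast
  then show "w \<in> ?L" by (auto simp: thick_space_loop loop_set_def thick_F_def)
qed

text \<open>Once \<open>r \<ge> \<alpha>/2\<close>, every level set of the thickened loop reaches one of the two nodes and thus
  joins the two branches.\<close>
lemma thick_cls_loop_eq:
  assumes r: "\<alpha>/2 \<le> r"
    and z: "z \<in> topspace (thick_space (loop_space \<alpha>) r)" and w: "w \<in> topspace (thick_space (loop_space \<alpha>) r)"
    and level: "thick_F fst z = thick_F fst w"
  shows "thick_cls (loop_space \<alpha>) fst r z = thick_cls (loop_space \<alpha>) fst r w"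
proof -
  define c where "c = thick_F fst w"
  define I where "I = {max 0 (c - r)..min \<alpha> (c + r)}"
  define upper where "upper = (\<lambda>a. ((a, a * (\<alpha> - a)), c - a)) ` I"
  define lower where "lower = (\<lambda>a. ((a, - (a * (\<alpha> - a))), c - a)) ` I"
  obtain a b s where ws: "w = ((a, b), s)" by (metis prod.exhaust)
  have "(a, b) \<in> loop_set \<alpha>" "-r \<le> s" "s \<le> r" "c = a + s"
    using w ws by (auto simp: thick_space_loop thick_F_def c_def)
  then have "0 \<le> a" "a \<le> \<alpha>" "-r \<le> s" "s \<le> r" "c = a + s" by (auto simp: loop_set_def)
  then have "0 \<in> I \<or> \<alpha> \<in> I"
    using r unfolding I_def by (cases "c \<le> r") auto
  moreover have "((0, 0), c) \<in> upper \<inter> lower" if "0 \<in> I"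
    using that unfolding upper_def lower_def by (auto intro!: image_eqI[where x=0])
  moreover have "((\<alpha>, 0), c - \<alpha>) \<in> upper \<inter> lower" if "\<alpha> \<in> I"
    using that unfolding upper_def lower_def by (auto intro!: image_eqI[where x=\<alpha>])
  ultimately have node: "upper \<inter> lower \<noteq> {}" by blast
  have "connected upper" "connected lower"
    unfolding upper_def lower_def I_def
    by (intro connected_continuous_image continuous_intros connected_Icc)+
  then have "connected (upper \<union> lower)" using connected_Un node by blast
  moreover have level_set: "{v \<in> topspace (thick_space (loop_space \<alpha>) r). thick_F fst v = c} = upper \<union> lower"
    unfolding upper_def lower_def I_def by (rule loop_level_set_eq)
  ultimately have "connectedin (thick_space (loop_space \<alpha>) r)
      {v \<in> topspace (thick_space (loop_space \<alpha>) r). thick_F fst v = c}"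
    by (simp add: thick_space_loop connectedin_subtopology) blast
  then show ?thesis
    using thick_cls_eq_level_set[of "loop_space \<alpha>" r fst c] z w level unfolding c_def by simp
qed

section \<open>The interleaving distance between the edge and the loop\<close>

lemma interleaving_distance_eqI:
  assumes "interleaved X1 f1 X2 f2 d" "0 \<le> d"
    and "\<And>\<epsilon>. 0 \<le> \<epsilon> \<Longrightarrow> interleaved X1 f1 X2 f2 \<epsilon> \<Longrightarrow> d \<le> \<epsilon>"
  shows "interleaving_distance X1 f1 X2 f2 = ereal d"
  unfolding interleaving_distance_def
proof (rule antisym)
  show "Inf {ereal \<epsilon> |\<epsilon>. 0 \<le> \<epsilon> \<and> interleaved X1 f1 X2 f2 \<epsilon>} \<le> ereal d"
    using assms(1,2) by (intro Inf_lower CollectI exI[where x=d]) simp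
  show "ereal d \<le> Inf {ereal \<epsilon> |\<epsilon>. 0 \<le> \<epsilon> \<and> interleaved X1 f1 X2 f2 \<epsilon>}"
  proof (rule Inf_greatest)
    fix e assume "e \<in> {ereal \<epsilon> |\<epsilon>. 0 \<le> \<epsilon> \<and> interleaved X1 f1 X2 f2 \<epsilon>}"
    then obtain \<epsilon> where "e = ereal \<epsilon>" "0 \<le> \<epsilon>" "interleaved X1 f1 X2 f2 \<epsilon>" by blast
    then show "ereal d \<le> e" using assms(3) by simp
  qed
qed

lemma interleaving_distance_lessE:
  assumes "interleaving_distance X1 f1 X2 f2 < ereal c"
  obtains \<epsilon> where "0 \<le> \<epsilon>" "\<epsilon> < c" "interleaved X1 f1 X2 f2 \<epsilon>"
  using assms unfolding interleaving_distance_def Inf_less_iff by auto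

lemma reeb_morphism_thick_clsI:
  assumes "continuous_map X (thick_space Y r) k" "\<And>x. x \<in> topspace X \<Longrightarrow> thick_F g (k x) = f x"
  shows "reeb_morphism X f (thick Y g r) (thick_fun g) (\<lambda>x. thick_cls Y g r (k x))"
  unfolding reeb_morphism_def
proof
  show "continuous_map X (thick Y g r) (\<lambda>x. thick_cls Y g r (k x))"
    using continuous_map_compose[OF assms(1) continuous_map_thick_cls] by (simp add: o_def)
  show "\<forall>x\<in>topspace X. thick_fun g (thick_cls Y g r (k x)) = f x"
  proof
    fix x assume x: "x \<in> topspace X"
    then have "k x \<in> topspace (thick_space Y r)"
      using continuous_map_image_subset_topspace[OF assms(1)] by blast
    then show "thick_fun g (thick_cls Y g r (k x)) = f x"
      using thick_fun_thick_cls[of "k x" Y r g] assms(2)[OF x] by simp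
  qed
qed

lemma reeb_morphism_edge_to_upper_branch:
  assumes "0 \<le> r"
  shows "reeb_morphism (edge_space \<alpha>) (\<lambda>t. t) (thick (loop_space \<alpha>) fst r) (thick_fun fst)
    (\<lambda>t. thick_cls (loop_space \<alpha>) fst r ((t, t * (\<alpha> - t)), 0))"
proof (rule reeb_morphism_thick_clsI)
  show "continuous_map (edge_space \<alpha>) (thick_space (loop_space \<alpha>) r) (\<lambda>t. ((t, t * (\<alpha> - t)), 0))"
    unfolding thick_space_loop edge_space_def continuous_map_subtopology_eu
    using assms by (intro conjI continuous_intros) (auto simp: loop_set_def)
qed (simp add: thick_F_def)

lemma reeb_morphism_loop_to_edge:
  assumes "0 \<le> r"
  shows "reeb_morphism (loop_space \<alpha>) fst (thick (edge_space \<alpha>) (\<lambda>t. t) r) (thick_fun (\<lambda>t. t))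
    (\<lambda>y. thick_cls (edge_space \<alpha>) (\<lambda>t. t) r (fst y, 0))"
proof (rule reeb_morphism_thick_clsI)
  show "continuous_map (loop_space \<alpha>) (thick_space (edge_space \<alpha>) r) (\<lambda>y. (fst y, 0))"
    unfolding thick_space_edge loop_space_def continuous_map_subtopology_eu
    using assms by (intro conjI continuous_intros) auto
qed (simp add: thick_F_def)

lemma interleaved_edge_loop:
  assumes "\<alpha> > 0"
  shows "interleaved (edge_space \<alpha>) (\<lambda>t. t) (loop_space \<alpha>) fst (\<alpha>/4)"
proof -
  let ?E = "edge_space \<alpha>" and ?L = "loop_space \<alpha>"
  define \<phi> where "\<phi> t = thick_cls ?L fst (\<alpha>/4) ((t, t * (\<alpha> - t)), 0)" for t
  define \<psi> where "\<psi> y = thick_cls ?E (\<lambda>t. t) (\<alpha>/4) (fst y, 0)" for y :: "real \<times> real"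
  have \<phi>: "reeb_morphism ?E (\<lambda>t. t) (thick ?L fst (\<alpha>/4)) (thick_fun fst) \<phi>"
    unfolding \<phi>_def using assms by (intro reeb_morphism_edge_to_upper_branch) simp
  have \<psi>: "reeb_morphism ?L fst (thick ?E (\<lambda>t. t) (\<alpha>/4)) (thick_fun (\<lambda>t. t)) \<psi>"
    unfolding \<psi>_def using assms by (intro reeb_morphism_loop_to_edge) simp
  have loop_comp: "reeb_ext ?L fst (\<alpha>/4) \<phi> (\<psi> y) = reeb_shift ?L fst (2 * (\<alpha>/4)) y" if y: "y \<in> topspace ?L" for y
  proof -
    obtain w where w: "reeb_ext ?L fst (\<alpha>/4) \<phi> (\<psi> y) = thick_cls ?L fst (2*(\<alpha>/4)) w"
      "w \<in> topspace (thick_space ?L (2*(\<alpha>/4)))" "thick_F fst w = fst y"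
      by (rule reeb_ext_comp_representativeE[OF \<psi> \<phi> y])
    moreover have "(y, 0) \<in> topspace (thick_space ?L (2*(\<alpha>/4)))"
      using y assms by (simp add: topspace_thick_space)
    ultimately show ?thesis
      unfolding reeb_shift_def using thick_cls_loop_eq[of \<alpha> "2*(\<alpha>/4)" w "(y, 0)"]
      by (simp add: thick_F_def)
  qed
  have edge_comp: "reeb_ext ?E (\<lambda>t. t) (\<alpha>/4) \<psi> (\<phi> x) = reeb_shift ?E (\<lambda>t. t) (2 * (\<alpha>/4)) x"
    if x: "x \<in> topspace ?E" for x
  proof -
    obtain w where "reeb_ext ?E (\<lambda>t. t) (\<alpha>/4) \<psi> (\<phi> x) = thick_cls ?E (\<lambda>t. t) (2*(\<alpha>/4)) w"
      "w \<in> topspace (thick_space ?E (2*(\<alpha>/4)))" "thick_F (\<lambda>t. t) w = x"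
      by (rule reeb_ext_comp_representativeE[OF \<phi> \<psi> x])
    moreover have "(x, 0) \<in> topspace (thick_space ?E (2*(\<alpha>/4)))"
      using x assms by (simp add: topspace_thick_space)
    ultimately show ?thesis
      unfolding reeb_shift_def using thick_cls_edge_eq[of w \<alpha> "2*(\<alpha>/4)" "(x, 0)"]
      by (simp add: thick_F_def)
  qed
  show ?thesis
    unfolding interleaved_def
    by (intro exI[where x=\<phi>] exI[where x=\<psi>] conjI ballI \<phi> \<psi> loop_comp edge_comp)
qed

lemma interleaved_edge_loop_ge:
  assumes "0 \<le> \<epsilon>" and "interleaved (edge_space \<alpha>) (\<lambda>t. t) (loop_space \<alpha>) fst \<epsilon>"
  shows "\<alpha>/4 \<le> \<epsilon>"
proof (rule ccontr)
  assume "\<not> \<alpha>/4 \<le> \<epsilon>"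
  let ?E = "edge_space \<alpha>" and ?L = "loop_space \<alpha>"
  obtain \<phi> \<psi> where \<psi>: "reeb_morphism ?L fst (thick ?E (\<lambda>t. t) \<epsilon>) (thick_fun (\<lambda>t. t)) \<psi>"
    and comp: "\<forall>y\<in>topspace ?L. reeb_ext ?L fst \<epsilon> \<phi> (\<psi> y) = reeb_shift ?L fst (2 * \<epsilon>) y"
    using assms(2) unfolding interleaved_def by blast
  define top where "top = (\<alpha>/2, \<alpha>/2 * (\<alpha> - \<alpha>/2))"
  define bot where "bot = (\<alpha>/2, - (\<alpha>/2 * (\<alpha> - \<alpha>/2)))"
  have "\<alpha> > 0" using \<open>\<not> \<alpha>/4 \<le> \<epsilon>\<close> assms(1) by simp
  then have tb: "top \<in> topspace ?L" "bot \<in> topspace ?L"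
    by (auto simp: top_def bot_def loop_space_def)
  obtain z where z: "z \<in> topspace (thick_space ?E \<epsilon>)" "\<psi> top = thick_cls ?E (\<lambda>t. t) \<epsilon> z"
      "thick_F (\<lambda>t. t) z = fst top"
    by (rule reeb_morphism_thickE[OF \<psi> tb(1)])
  obtain z' where z': "z' \<in> topspace (thick_space ?E \<epsilon>)" "\<psi> bot = thick_cls ?E (\<lambda>t. t) \<epsilon> z'"
      "thick_F (\<lambda>t. t) z' = fst bot"
    by (rule reeb_morphism_thickE[OF \<psi> tb(2)])
  have "\<psi> top = \<psi> bot"
    using z z' thick_cls_edge_eq[OF z(1) z'(1)] by (simp add: top_def bot_def)
  then have "thick_cls ?L fst (2*\<epsilon>) (top, 0) = thick_cls ?L fst (2*\<epsilon>) (bot, 0)"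
    using comp tb unfolding reeb_shift_def by metis
  moreover have "(top, 0) \<in> topspace (thick_space ?L (2*\<epsilon>))"
    using tb assms(1) by (auto simp: topspace_thick_space)
  ultimately have top_in: "(top, 0) \<in> thick_cls ?L fst (2*\<epsilon>) (bot, 0)"
    using thick_cls_refl[of "(top, 0)" ?L "2*\<epsilon>" fst] by simp
  have bot: "(bot, 0) \<in> topspace (thick_space ?L (2*\<epsilon>))"
    using tb assms(1) by (auto simp: topspace_thick_space)
  have "2*\<epsilon> < thick_F fst (bot, 0::real)" "thick_F fst (bot, 0::real) < \<alpha> - 2*\<epsilon>"
    using \<open>\<not> \<alpha>/4 \<le> \<epsilon>\<close> by (auto simp: thick_F_def bot_def)
  then have "(0 < snd top) = (0 < snd bot)"
    using thick_cls_loop_branch[OF bot _ _ top_in] by simp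
  then show False using \<open>\<alpha> > 0\<close> by (simp add: top_def bot_def)
qed

lemma interleaving_distance_edge_loop:
  assumes "\<alpha> > 0"
  shows "interleaving_distance (edge_space \<alpha>) (\<lambda>t. t) (loop_space \<alpha>) fst = ereal (\<alpha> / 4)"
  using assms interleaved_edge_loop interleaved_edge_loop_ge by (intro interleaving_distance_eqI) auto

section \<open>No Reeb graph halfway between the edge and the loop\<close>

locale edge_loop_interleaved =
  fixes M :: "'m topology" and g :: "'m \<Rightarrow> real" and \<alpha> \<epsilon> \<delta> :: real
    and \<phi>1 \<psi>1 \<phi>2 \<psi>2
  assumes continuous_g: "continuous_map M euclideanreal g"
    and nonneg: "0 \<le> \<epsilon>" "0 \<le> \<delta>" and small: "2*\<epsilon> + \<delta> < \<alpha>/2" "3*\<delta> < \<alpha>/2"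
    and \<phi>1: "reeb_morphism M g (thick (edge_space \<alpha>) (\<lambda>t. t) \<epsilon>) (thick_fun (\<lambda>t. t)) \<phi>1"
    and \<psi>1: "reeb_morphism (edge_space \<alpha>) (\<lambda>t. t) (thick M g \<epsilon>) (thick_fun g) \<psi>1"
    and comp_M: "\<forall>x\<in>topspace M. reeb_ext M g \<epsilon> \<psi>1 (\<phi>1 x) = reeb_shift M g (2 * \<epsilon>) x"
    and \<phi>2: "reeb_morphism M g (thick (loop_space \<alpha>) fst \<delta>) (thick_fun fst) \<phi>2"
    and \<psi>2: "reeb_morphism (loop_space \<alpha>) fst (thick M g \<delta>) (thick_fun g) \<psi>2"
    and comp_loop: "\<forall>y\<in>topspace (loop_space \<alpha>).
      reeb_ext (loop_space \<alpha>) fst \<delta> \<phi>2 (\<psi>2 y) = reeb_shift (loop_space \<alpha>) fst (2 * \<delta>) y"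
begin

definition upper_branch :: "'m \<Rightarrow> bool" where
  "upper_branch x \<longleftrightarrow> (\<exists>w\<in>\<phi>2 x. 0 < snd (fst w))"

definition branch_region :: "bool \<Rightarrow> 'm set" where
  "branch_region b = {x \<in> topspace M. \<delta> < g x \<and> g x < \<alpha> - \<delta> \<and> upper_branch x = b}"

lemma upper_branch_iff:
  assumes x: "x \<in> topspace M" "\<delta> < g x" "g x < \<alpha> - \<delta>" and w: "w \<in> \<phi>2 x"
  shows "upper_branch x \<longleftrightarrow> 0 < snd (fst w)"
proof -
  obtain z where z: "z \<in> topspace (thick_space (loop_space \<alpha>) \<delta>)"
      "\<phi>2 x = thick_cls (loop_space \<alpha>) fst \<delta> z" "thick_F fst z = g x"
    by (rule reeb_morphism_thickE[OF \<phi>2 x(1)])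
  have "(0 < snd (fst v)) = (0 < snd (fst z))" if "v \<in> \<phi>2 x" for v
    using thick_cls_loop_branch[OF z(1)] that x z(2,3) by simp
  then show ?thesis unfolding upper_branch_def using w by blast
qed

lemma openin_branch_region: "openin M (branch_region b)"
proof -
  let ?T = "thick_space (loop_space \<alpha>) \<delta>" and ?cls = "thick_cls (loop_space \<alpha>) fst \<delta>"
  define P where "P = {z \<in> topspace ?T. \<delta> < thick_F fst z \<and> thick_F fst z < \<alpha> - \<delta> \<and>
      (if b then 0 < snd (fst z) else snd (fst z) < 0)}"
  have "openin ?T P" unfolding P_def by (rule openin_loop_branch_band)
  moreover have "thick_saturated (loop_space \<alpha>) fst \<delta> P"
    unfolding thick_saturated_def
  proof (intro ballI subsetI)
    fix z w assume z: "z \<in> P" and w: "w \<in> ?cls z"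
    then have "z \<in> topspace ?T" "\<delta> < thick_F fst z" "thick_F fst z < \<alpha> - \<delta>" by (auto simp: P_def)
    moreover note thick_cls_memD[OF w]
    moreover have "snd (fst w) \<noteq> 0"
      using calculation by (intro loop_branch_nonzero[of w \<alpha> \<delta>]) auto
    ultimately show "w \<in> P"
      using z thick_cls_loop_branch[of z \<alpha> \<delta> w] w by (auto simp: P_def split: if_splits)
  qed
  ultimately have "openin (thick (loop_space \<alpha>) fst \<delta>) (?cls ` P)"
    by (rule openin_thick_cls_image)
  then have "openin M {x \<in> topspace M. \<phi>2 x \<in> ?cls ` P}"
    using \<phi>2 unfolding reeb_morphism_def by (blast intro: openin_continuous_map_preimage)
  moreover have "{x \<in> topspace M. \<phi>2 x \<in> ?cls ` P} = branch_region b"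
  proof (intro set_eqI iffI)
    fix x assume "x \<in> {x \<in> topspace M. \<phi>2 x \<in> ?cls ` P}"
    then obtain z where x: "x \<in> topspace M" and z: "z \<in> P" "\<phi>2 x = ?cls z" by blast
    then have zt: "z \<in> topspace ?T" by (simp add: P_def)
    have "thick_fun fst (\<phi>2 x) = g x" using \<phi>2 x unfolding reeb_morphism_def by blast
    then have "g x = thick_F fst z" using z(2) thick_fun_thick_cls[OF zt] by simp
    moreover have "upper_branch x \<longleftrightarrow> 0 < snd (fst z)"
      using upper_branch_iff[of x z] x z calculation thick_cls_refl[OF zt] by (simp add: P_def)
    ultimately show "x \<in> branch_region b"
      using x z(1) by (auto simp: branch_region_def P_def split: if_splits)
  next
    fix x assume "x \<in> branch_region b"
    then have x: "x \<in> topspace M" "\<delta> < g x" "g x < \<alpha> - \<delta>" "upper_branch x = b"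
      by (auto simp: branch_region_def)
    obtain z where z: "z \<in> topspace ?T" "\<phi>2 x = ?cls z" "thick_F fst z = g x" "z \<in> \<phi>2 x"
      by (rule reeb_morphism_thickE[OF \<phi>2 x(1)])
    have "snd (fst z) \<noteq> 0" using x z by (intro loop_branch_nonzero[OF z(1)]) auto
    then have "z \<in> P" using upper_branch_iff[OF x(1-3) z(4)] x z by (auto simp: P_def)
    then show "x \<in> {x \<in> topspace M. \<phi>2 x \<in> ?cls ` P}" using x(1) z(2) by blast
  qed
  ultimately show ?thesis by simp
qed

lemma thick_cls_branch_region:
  assumes z: "z \<in> topspace (thick_space M r)" "\<delta> + r < thick_F g z" "thick_F g z < \<alpha> - \<delta> - r"
    and w: "w \<in> thick_cls M g r z"
  shows "fst w \<in> branch_region (upper_branch (fst z))"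
proof -
  let ?T = "thick_space M r"
  define P where "P b = {v \<in> topspace ?T. fst v \<in> branch_region b}" for b
  have P_open: "openin ?T (P b)" for b
    unfolding P_def
    by (rule openin_continuous_map_preimage[OF continuous_map_thick_space_fst openin_branch_region])
  have band: "fst v \<in> topspace M \<and> \<delta> < g (fst v) \<and> g (fst v) < \<alpha> - \<delta>" if "v \<in> thick_cls M g r z" for v
    using thick_cls_memD[OF that] z(2,3) by (auto simp: topspace_thick_space thick_F_def)
  let ?b = "upper_branch (fst z)"
  have "thick_cls M g r z \<subseteq> P ?b \<union> P (\<not> ?b)"
  proof
    fix v assume "v \<in> thick_cls M g r z"
    then show "v \<in> P ?b \<union> P (\<not> ?b)"
      using band thick_cls_memD(1)[of v M g r z] by (auto simp: P_def branch_region_def)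
  qed
  moreover have "z \<in> P ?b"
    using band[OF thick_cls_refl[OF z(1)]] z(1) by (simp add: P_def branch_region_def)
  moreover have "P ?b \<inter> P (\<not> ?b) = {}" by (auto simp: P_def branch_region_def)
  ultimately have "thick_cls M g r z \<subseteq> P ?b"
    by (metis thick_cls_subset_open_cover P_open)
  then show ?thesis using w by (auto simp: P_def)
qed

definition edge_branch :: "real \<Rightarrow> bool" where
  "edge_branch t \<longleftrightarrow> (\<exists>w\<in>\<psi>1 t. upper_branch (fst w))"

lemma edge_branch_region:
  assumes t: "t \<in> {\<delta> + \<epsilon><..<\<alpha> - \<delta> - \<epsilon>}" and w: "w \<in> \<psi>1 t"
  shows "fst w \<in> branch_region (edge_branch t)"
proof -
  have "t \<in> topspace (edge_space \<alpha>)" using t nonneg by (auto simp: edge_space_def)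
  then obtain z where z: "z \<in> topspace (thick_space M \<epsilon>)" "\<psi>1 t = thick_cls M g \<epsilon> z"
      "thick_F g z = t" "z \<in> \<psi>1 t"
    by (rule reeb_morphism_thickE[OF \<psi>1])
  have region: "fst v \<in> branch_region (upper_branch (fst z))" if "v \<in> \<psi>1 t" for v
    using thick_cls_branch_region[OF z(1)] t z(2,3) that by simp
  have "edge_branch t = upper_branch (fst z)"
  proof
    assume "edge_branch t"
    then obtain v where "v \<in> \<psi>1 t" "upper_branch (fst v)" unfolding edge_branch_def by blast
    then show "upper_branch (fst z)" using region[of v] by (simp add: branch_region_def)
  next
    assume "upper_branch (fst z)"
    then show "edge_branch t" using z(4) unfolding edge_branch_def by blast
  qed
  then show ?thesis using region[OF w] by simp
qed

lemma edge_branch_eq: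
  assumes "t \<in> {\<delta> + \<epsilon><..<\<alpha> - \<delta> - \<epsilon>}" "t' \<in> {\<delta> + \<epsilon><..<\<alpha> - \<delta> - \<epsilon>}"
  shows "edge_branch t = edge_branch t'"
proof -
  let ?J = "{\<delta> + \<epsilon><..<\<alpha> - \<delta> - \<epsilon>}" and ?T = "thick_space M \<epsilon>" and ?cls = "thick_cls M g \<epsilon>"
  define P where "P b = {w \<in> topspace ?T. \<delta> + \<epsilon> < thick_F g w \<and> thick_F g w < \<alpha> - \<delta> - \<epsilon> \<and>
      fst w \<in> branch_region b}" for b
  have J: "?J \<subseteq> topspace (edge_space \<alpha>)" using nonneg by (auto simp: edge_space_def)
  have P_open: "openin ?T (P b)" for b
    unfolding P_def
    by (intro openin_Collect_conj openin_Collect_real_less continuous_map_thick_F continuous_g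
        continuous_map_const[THEN iffD2] openin_continuous_map_preimage[OF continuous_map_thick_space_fst
        openin_branch_region]; simp)
  have P_saturated: "thick_saturated M g \<epsilon> (P b)" for b
    unfolding thick_saturated_def
  proof (intro ballI subsetI)
    fix z w assume "z \<in> P b" "w \<in> ?cls z"
    then show "w \<in> P b"
      using thick_cls_branch_region[of z \<epsilon> w] thick_cls_memD[of w M g \<epsilon> z]
      by (auto simp: P_def branch_region_def)
  qed
  have psi1_in: "\<psi>1 s \<in> ?cls ` P (edge_branch s)" if s: "s \<in> ?J" for s
  proof -
    obtain z where z: "z \<in> topspace ?T" "\<psi>1 s = ?cls z" "thick_F g z = s" "z \<in> \<psi>1 s"
      by (rule reeb_morphism_thickE[OF \<psi>1]) (use s J in blast)
    then have "z \<in> P (edge_branch s)" using s edge_branch_region[OF s z(4)] by (simp add: P_def)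
    then show ?thesis using z(2) by blast
  qed
  have disjoint: "P b \<inter> P (\<not> b) = {}" for b by (auto simp: P_def branch_region_def)
  have cover: "\<psi>1 s \<in> ?cls ` P (edge_branch t) \<union> ?cls ` P (\<not> edge_branch t)" if "s \<in> ?J" for s
    using psi1_in[OF that] by (cases "edge_branch s = edge_branch t") auto
  have J_connected: "connectedin (edge_space \<alpha>) ?J"
    using J by (simp add: edge_space_def connectedin_subtopology)
  have "continuous_map (edge_space \<alpha>) (thick M g \<epsilon>) \<psi>1"
    using \<psi>1 unfolding reeb_morphism_def by blast
  from connectedin_thick_saturated_cover[OF this J_connected P_open P_saturated P_open P_saturated
      disjoint cover assms(1) psi1_in[OF assms(1)] assms(2)]
  have "\<psi>1 t' \<in> ?cls ` P (edge_branch t)" .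
  moreover have "\<psi>1 t' \<notin> ?cls ` P (\<not> edge_branch t)"
    using calculation thick_cls_image_disjoint[OF P_saturated _ disjoint] P_open openin_subset by blast
  ultimately show ?thesis using psi1_in[OF assms(2)] by (cases "edge_branch t'") auto
qed

text \<open>The \<open>2\<epsilon>\<close>-shift of \<open>x\<close> factors through the edge near its middle, where the branch
  chosen through \<open>\<psi>1\<close> is constant.\<close>
lemma upper_branch_mid:
  assumes x: "x \<in> topspace M" "\<delta> + 2*\<epsilon> < g x" "g x < \<alpha> - \<delta> - 2*\<epsilon>"
  shows "upper_branch x = edge_branch (\<alpha>/2)"
proof -
  obtain p q where q: "q \<in> \<psi>1 (fst p)"
    and comp: "reeb_ext M g \<epsilon> \<psi>1 (\<phi>1 x) = thick_cls M g (2*\<epsilon>) (fst q, snd q + snd p)"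
    and p: "p \<in> topspace (thick_space (edge_space \<alpha>) \<epsilon>)" "thick_F (\<lambda>t. t) p = g x"
    and v: "(fst q, snd q + snd p) \<in> topspace (thick_space M (2*\<epsilon>))"
    by (rule reeb_ext_compE[OF \<phi>1 \<psi>1 x(1)])
  have J: "fst p \<in> {\<delta> + \<epsilon><..<\<alpha> - \<delta> - \<epsilon>}" "\<alpha>/2 \<in> {\<delta> + \<epsilon><..<\<alpha> - \<delta> - \<epsilon>}"
    using p x(2,3) small nonneg by (auto simp: topspace_thick_space thick_F_def)
  have edge: "fst q \<in> branch_region (edge_branch (\<alpha>/2))"
    using edge_branch_region[OF J(1) q] edge_branch_eq[OF J] by simp
  have x0: "(x, 0) \<in> topspace (thick_space M (2*\<epsilon>))"
    using x(1) nonneg by (simp add: topspace_thick_space)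
  have "(fst q, snd q + snd p) \<in> thick_cls M g (2*\<epsilon>) (x, 0)"
    using comp comp_M x(1) thick_cls_refl[OF v] unfolding reeb_shift_def by simp
  moreover have "\<delta> + 2*\<epsilon> < thick_F g (x, 0)" "thick_F g (x, 0) < \<alpha> - \<delta> - 2*\<epsilon>"
    using x(2,3) by (simp_all add: thick_F_def)
  ultimately have "fst q \<in> branch_region (upper_branch x)"
    using thick_cls_branch_region[OF x0] by fastforce
  with edge show ?thesis by (auto simp: branch_region_def)
qed

text \<open>The \<open>2\<delta>\<close>-shift of \<open>y\<close> factors through \<open>\<phi>2\<close>, and it does not change the branch.\<close>
lemma psi2_branch_region:
  assumes y: "y \<in> topspace (loop_space \<alpha>)" "2*\<delta> < fst y" "fst y < \<alpha> - 2*\<delta>" and w: "w \<in> \<psi>2 y"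
  shows "fst w \<in> branch_region (0 < snd y)"
proof -
  obtain p q where p: "p \<in> \<psi>2 y" and q: "q \<in> \<phi>2 (fst p)"
    and comp: "reeb_ext (loop_space \<alpha>) fst \<delta> \<phi>2 (\<psi>2 y) =
      thick_cls (loop_space \<alpha>) fst (2*\<delta>) (fst q, snd q + snd p)"
    and p_level: "p \<in> topspace (thick_space M \<delta>)" "thick_F g p = fst y"
    and v: "(fst q, snd q + snd p) \<in> topspace (thick_space (loop_space \<alpha>) (2*\<delta>))"
    by (rule reeb_ext_compE[OF \<psi>2 \<phi>2 y(1)])
  have y0: "(y, 0) \<in> topspace (thick_space (loop_space \<alpha>) (2*\<delta>))"
    using y(1) nonneg by (simp add: topspace_thick_space)
  have "(fst q, snd q + snd p) \<in> thick_cls (loop_space \<alpha>) fst (2*\<delta>) (y, 0)"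
    using comp comp_loop y(1) thick_cls_refl[OF v] unfolding reeb_shift_def by simp
  moreover have "2*\<delta> < thick_F fst (y, 0)" "thick_F fst (y, 0) < \<alpha> - 2*\<delta>"
    using y(2,3) by (simp_all add: thick_F_def)
  ultimately have "(0 < snd (fst q)) = (0 < snd y)"
    using thick_cls_loop_branch[OF y0] by fastforce
  moreover have "fst p \<in> topspace M" "\<delta> < g (fst p)" "g (fst p) < \<alpha> - \<delta>"
    using p_level y(2,3) by (auto simp: topspace_thick_space thick_F_def)
  ultimately have branch_p: "upper_branch (fst p) = (0 < snd y)"
    using upper_branch_iff q by simp
  obtain z where z: "z \<in> topspace (thick_space M \<delta>)" "\<psi>2 y = thick_cls M g \<delta> z" "thick_F g z = fst y"
    by (rule reeb_morphism_thickE[OF \<psi>2 y(1)])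
  have region: "fst v \<in> branch_region (upper_branch (fst z))" if "v \<in> \<psi>2 y" for v
    using thick_cls_branch_region[OF z(1)] y(2,3) z(2,3) that by simp
  then have "upper_branch (fst p) = upper_branch (fst z)"
    using p by (auto simp: branch_region_def)
  then show ?thesis using region[OF w] branch_p by simp
qed

definition side_region :: "bool \<Rightarrow> ('m \<times> real) set" where
  "side_region below = {w \<in> topspace (thick_space M \<delta>). 2*\<delta> < thick_F g w \<and> thick_F g w < \<alpha> - 2*\<delta> \<and>
     fst w \<in> branch_region (\<not> edge_branch (\<alpha>/2)) \<and>
     (if below then g (fst w) < \<alpha>/2 else \<alpha>/2 < g (fst w))}"

lemma openin_side_region: "openin (thick_space M \<delta>) (side_region below)"
proof -
  have F: "continuous_map (thick_space M \<delta>) euclideanreal (thick_F g)"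
    by (rule continuous_map_thick_F[OF continuous_g])
  have height: "continuous_map (thick_space M \<delta>) euclideanreal (\<lambda>w. g (fst w))"
    using continuous_map_compose[OF continuous_map_thick_space_fst continuous_g] by (simp add: o_def)
  have "openin (thick_space M \<delta>)
      {w \<in> topspace (thick_space M \<delta>). if below then g (fst w) < \<alpha>/2 else \<alpha>/2 < g (fst w)}"
    using openin_Collect_real_less[OF height continuous_map_const[THEN iffD2], of "\<alpha>/2"]
      openin_Collect_real_less[OF continuous_map_const[THEN iffD2] height, of "\<alpha>/2"]
    by (cases below) auto
  moreover have "openin (thick_space M \<delta>)
      {w \<in> topspace (thick_space M \<delta>). fst w \<in> branch_region (\<not> edge_branch (\<alpha>/2))}"
    by (rule openin_continuous_map_preimage[OF continuous_map_thick_space_fst openin_branch_region])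
  moreover have "openin (thick_space M \<delta>) {w \<in> topspace (thick_space M \<delta>). 2*\<delta> < thick_F g w}"
    "openin (thick_space M \<delta>) {w \<in> topspace (thick_space M \<delta>). thick_F g w < \<alpha> - 2*\<delta>}"
    by (intro openin_Collect_real_less F continuous_map_const[THEN iffD2]; simp)+
  ultimately show ?thesis unfolding side_region_def by (intro openin_Collect_conj)
qed

lemma side_region_saturated: "thick_saturated M g \<delta> (side_region below)"
  unfolding thick_saturated_def
proof (intro ballI subsetI)
  fix z w assume z: "z \<in> side_region below" and w: "w \<in> thick_cls M g \<delta> z"
  let ?T = "thick_space M \<delta>" and ?C = "thick_cls M g \<delta> z"
  have zt: "z \<in> topspace ?T" "\<delta> + \<delta> < thick_F g z" "thick_F g z < \<alpha> - \<delta> - \<delta>"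
    and branch_z: "upper_branch (fst z) = (\<not> edge_branch (\<alpha>/2))"
    using z by (auto simp: side_region_def branch_region_def)
  have region: "fst v \<in> branch_region (\<not> edge_branch (\<alpha>/2))" if "v \<in> ?C" for v
    using thick_cls_branch_region[OF zt that] branch_z by simp
  have off_mid: "g (fst v) \<noteq> \<alpha>/2" if "v \<in> ?C" for v
    using region[OF that] upper_branch_mid[of "fst v"] small by (auto simp: branch_region_def)
  define L where "L = {v \<in> topspace ?T. if below then g (fst v) < \<alpha>/2 else \<alpha>/2 < g (fst v)}"
  define U where "U = {v \<in> topspace ?T. if below then \<alpha>/2 < g (fst v) else g (fst v) < \<alpha>/2}"
  have height: "continuous_map ?T euclideanreal (\<lambda>v. g (fst v))"
    using continuous_map_compose[OF continuous_map_thick_space_fst continuous_g] by (simp add: o_def)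
  have "openin ?T {v \<in> topspace ?T. g (fst v) < \<alpha>/2}" "openin ?T {v \<in> topspace ?T. \<alpha>/2 < g (fst v)}"
    using openin_Collect_real_less[OF height continuous_map_const[THEN iffD2], of "\<alpha>/2"]
      openin_Collect_real_less[OF continuous_map_const[THEN iffD2] height, of "\<alpha>/2"] by auto
  then have "openin ?T L" "openin ?T U" unfolding L_def U_def by (cases below; simp)+
  moreover have "?C \<subseteq> L \<union> U"
  proof
    fix v assume v: "v \<in> ?C"
    then show "v \<in> L \<union> U"
      using off_mid[OF v] thick_cls_memD(1)[OF v] by (auto simp: L_def U_def neq_iff)
  qed
  moreover have "L \<inter> U = {}" by (auto simp: L_def U_def)
  moreover have "z \<in> L" using z by (auto simp: L_def side_region_def)
  ultimately have "?C \<subseteq> L" by (metis thick_cls_subset_open_cover)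
  then show "w \<in> side_region below"
    using w region[OF w] thick_cls_memD[OF w] zt by (auto simp: L_def side_region_def)
qed

lemma psi2_side_region:
  assumes y: "y \<in> topspace (loop_space \<alpha>)" "2*\<delta> < fst y" "fst y < \<alpha> - 2*\<delta>"
    and branch: "(0 < snd y) \<noteq> edge_branch (\<alpha>/2)"
  obtains z where "z \<in> side_region (g (fst z) < \<alpha>/2)" "\<psi>2 y = thick_cls M g \<delta> z"
    "fst y - \<delta> \<le> g (fst z)" "g (fst z) \<le> fst y + \<delta>"
proof -
  obtain z where z: "z \<in> topspace (thick_space M \<delta>)" "\<psi>2 y = thick_cls M g \<delta> z"
      "thick_F g z = fst y" "z \<in> \<psi>2 y"
    by (rule reeb_morphism_thickE[OF \<psi>2 y(1)])
  have region: "fst z \<in> branch_region (\<not> edge_branch (\<alpha>/2))"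
    using psi2_branch_region[OF y z(4)] branch by (cases "edge_branch (\<alpha>/2)") auto
  then have "g (fst z) \<noteq> \<alpha>/2"
    using upper_branch_mid[of "fst z"] small by (auto simp: branch_region_def)
  moreover have "fst y - \<delta> \<le> g (fst z)" "g (fst z) \<le> fst y + \<delta>"
    using z(1,3) by (auto simp: topspace_thick_space thick_F_def)
  ultimately have "z \<in> side_region (g (fst z) < \<alpha>/2)"
    using z y(2,3) region by (auto simp: side_region_def neq_iff)
  then show ?thesis using that z(2) \<open>fst y - \<delta> \<le> g (fst z)\<close> \<open>g (fst z) \<le> fst y + \<delta>\<close> by blast
qed

lemma inconsistent: False
proof -
  let ?\<kappa> = "edge_branch (\<alpha>/2)" and ?cls = "thick_cls M g \<delta>" and ?I = "{2*\<delta><..<\<alpha> - 2*\<delta>}"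
  let ?arc = "loop_point \<alpha> (\<not> ?\<kappa>)"
  have arc: "?arc a \<in> topspace (loop_space \<alpha>)" "2*\<delta> < fst (?arc a)" "fst (?arc a) < \<alpha> - 2*\<delta>"
    "(0 < snd (?arc a)) \<noteq> ?\<kappa>" if "a \<in> ?I" for a
    using that nonneg loop_point_in_loop[of a \<alpha>] by (auto simp: loop_point_def)
  have cover: "\<psi>2 y \<in> ?cls ` side_region True \<union> ?cls ` side_region False" if "y \<in> ?arc ` ?I" for y
  proof -
    obtain a where a: "a \<in> ?I" "y = ?arc a" using \<open>y \<in> ?arc ` ?I\<close> by blast
    obtain z where "z \<in> side_region (g (fst z) < \<alpha>/2)" "\<psi>2 (?arc a) = ?cls z"
      by (rule psi2_side_region[OF arc[OF a(1)]])
    then show ?thesis using a(2) by (cases "g (fst z) < \<alpha>/2") auto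
  qed
  define a1 where "a1 = \<alpha>/4 + \<delta>/2"
  define a2 where "a2 = 3*\<alpha>/4 - \<delta>/2"
  have a12: "a1 \<in> ?I" "a2 \<in> ?I" "a1 + \<delta> < \<alpha>/2" "\<alpha>/2 < a2 - \<delta>"
    using small nonneg by (auto simp: a1_def a2_def)
  obtain z1 where "z1 \<in> side_region (g (fst z1) < \<alpha>/2)" "\<psi>2 (?arc a1) = ?cls z1"
      "g (fst z1) \<le> fst (?arc a1) + \<delta>"
    by (rule psi2_side_region[OF arc[OF a12(1)]])
  then have below: "\<psi>2 (?arc a1) \<in> ?cls ` side_region True"
    using a12(3) by (auto simp: loop_point_def)
  obtain z2 where "z2 \<in> side_region (g (fst z2) < \<alpha>/2)" "\<psi>2 (?arc a2) = ?cls z2"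
      "fst (?arc a2) - \<delta> \<le> g (fst z2)"
    by (rule psi2_side_region[OF arc[OF a12(2)]])
  then have above: "\<psi>2 (?arc a2) \<in> ?cls ` side_region False"
    using a12(4) by (auto simp: loop_point_def)
  have continuous: "continuous_map (loop_space \<alpha>) (thick M g \<delta>) \<psi>2"
    using \<psi>2 unfolding reeb_morphism_def by blast
  have connected: "connectedin (loop_space \<alpha>) (?arc ` ?I)"
    using nonneg by (intro connectedin_loop_arc) auto
  have disjoint: "side_region True \<inter> side_region False = {}"
    by (auto simp: side_region_def)
  from connectedin_thick_saturated_cover[OF continuous connected openin_side_region side_region_saturated
      openin_side_region side_region_saturated disjoint cover imageI[OF a12(1)] below imageI[OF a12(2)]]
  have "\<psi>2 (?arc a2) \<in> ?cls ` side_region True" .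
  with above show False
    using thick_cls_image_disjoint[OF side_region_saturated _ disjoint] openin_side_region openin_subset
    by blast
qed

end

lemma not_interleaved_edge_and_loop:
  assumes "continuous_map M euclideanreal g" "0 \<le> \<epsilon>" "0 \<le> \<delta>" "2*\<epsilon> + \<delta> < \<alpha>/2" "3*\<delta> < \<alpha>/2"
    and "interleaved M g (edge_space \<alpha>) (\<lambda>t. t) \<epsilon>" "interleaved M g (loop_space \<alpha>) fst \<delta>"
  shows False
proof -
  obtain \<phi>1 \<psi>1 \<phi>2 \<psi>2 where "edge_loop_interleaved M g \<alpha> \<epsilon> \<delta> \<phi>1 \<psi>1 \<phi>2 \<psi>2"
    using assms unfolding interleaved_def edge_loop_interleaved_def by blast
  then show False by (rule edge_loop_interleaved.inconsistent)
qed

theorem mainTheorem7: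
  fixes \<alpha> :: real
  assumes "\<alpha> > 0"
  shows "interleaving_distance (edge_space \<alpha>) (\<lambda>t. t) (loop_space \<alpha>) fst = ereal (\<alpha> / 4) \<and>
         \<not> (\<exists>M g. reeb_graph (M :: 'm topology) (g :: 'm \<Rightarrow> real) \<and>
               interleaving_distance M g (edge_space \<alpha>) (\<lambda>t. t) = ereal (\<alpha> / 8) \<and>
               interleaving_distance M g (loop_space \<alpha>) fst = ereal (\<alpha> / 8))"
proof (intro conjI notI)
  show "interleaving_distance (edge_space \<alpha>) (\<lambda>t. t) (loop_space \<alpha>) fst = ereal (\<alpha> / 4)"
    using assms by (rule interleaving_distance_edge_loop)
next
  assume "\<exists>M g. reeb_graph (M :: 'm topology) (g :: 'm \<Rightarrow> real) \<and>
      interleaving_distance M g (edge_space \<alpha>) (\<lambda>t. t) = ereal (\<alpha> / 8) \<and>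
      interleaving_distance M g (loop_space \<alpha>) fst = ereal (\<alpha> / 8)"
  then obtain M :: "'m topology" and g where "reeb_graph M g"
    and "interleaving_distance M g (edge_space \<alpha>) (\<lambda>t. t) < ereal (\<alpha> / 6)"
    and "interleaving_distance M g (loop_space \<alpha>) fst < ereal (\<alpha> / 6)"
    using assms by auto
  then obtain \<epsilon> \<delta> where "0 \<le> \<epsilon>" "\<epsilon> < \<alpha> / 6" "interleaved M g (edge_space \<alpha>) (\<lambda>t. t) \<epsilon>"
    and "0 \<le> \<delta>" "\<delta> < \<alpha> / 6" "interleaved M g (loop_space \<alpha>) fst \<delta>"
    by (metis interleaving_distance_lessE)
  moreover have "continuous_map M euclideanreal g"
    using \<open>reeb_graph M g\<close> unfolding reeb_graph_def by blast
  ultimately show False by (intro not_interleaved_edge_and_loop[of M g \<epsilon> \<delta> \<alpha>]) auto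
qed

end
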